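(* Consider observations $y_i = y(t_i) = F(x_0)(t_i) + \epsilon_i$, $i=1,\dots,n$, where $F:\mathbf X\to\mathbf Y$ is a known linear operator between Hilbert spaces of real functions, $t_1,\dots,t_n$ is a fixed design, and $\epsilon_1,\dots,\epsilon_n$ are independent with zero mean, finite variance, and satisfying: there is $K<\infty$ with $\max_{i}\mathbf E\exp[\epsilon_i^2/K^2]\le K$. Let $(\lambda_j;\varphi_j,\psi_j)_{j=1,\dots,n}$ be a singular system of $F$ as in the context, and assume $F$ has index of ill-posedness $t>0$, i.e. $\lambda_j=O(j^{-t})$. Let $c>0$ be the constant (depending on $K$) for which $\mathbf P(\max_j|\frac1n\sum_i\varphi_j(t_i)\epsilon_i|>c\sqrt{\log n/n})\le c\exp[-\log n/c^2]$, set $\mu_j=\frac{2c}{\lambda_j}\sqrt{\frac{\log n}{n}}$, and let $$\hat x_n=\sum_{j=1}^n \hat x_j\psi_j \in \arg\min_{x=\sum_{j=1}^n x_j\psi_j}\Big[\sum_{j=1}^n\Big|\Big\langle y-F(x),\frac{\varphi_j}{\lambda_j}\Big\rangle_n\Big|^2+\sum_{j=1}^n\mu_j|x_j|\Big].$$ Assume there are $s$ and $0<p<2$ with $\frac1p=\frac12+\frac{s}{2t+1}$ such that $x_0=\sum_j x_{j,0}\psi_j$ belongs to $$X_{s,p}=\Big\{x=\sum_{j=1}^n x_j\psi_j:\ \sum_{j=1}^n j^{p(s+\frac12-\frac1p)}|x_j|^p\le1\Big\}.$$ Then $$\|\hat x_n-x_0\|_n^2=O_{\mathbf P}\Big(\Big(\frac{n}{\log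 n}\Big)^{-\frac{2s}{2s+2t+1}}\Big).$$
   Context: The empirical norm is $\|y\|_n^2=\frac1n\sum_{i=1}^n y(t_i)^2$ with empirical inner product $\langle y,z\rangle_n=\frac1n\sum_{i=1}^n y(t_i)z(t_i)$; for the data vector $y=(y_i)$, $\langle y,\varphi\rangle_n=\frac1n\sum_i y_i\varphi(t_i)$. The singular system satisfies $F\psi_j=\lambda_j\varphi_j$, $F^*\varphi_j=\lambda_j\psi_j$, where $\lambda_j^2>0$ are the nonzero eigenvalues of $F^*F$ in decreasing order, and $\{\psi_j\}$, $\{\varphi_j\}$ are complete orthonormal systems with respect to $\|\cdot\|_n$ of eigenvectors of $F^*F$ and $FF^*$; for $x=\sum_j x_j\psi_j$, $\|x\|_n^2=\sum_j x_j^2$. $O_{\mathbf P}$ denotes boundedness in probability. *)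

theory Defs
  imports "HOL-Probability.Probability"
begin

text \<open>Empirical inner product at the design points dsg n 1, ..., dsg n n
  (the n-th design of the sequence of problems).\<close>
definition emp_inner :: "(nat \<Rightarrow> nat \<Rightarrow> real) \<Rightarrow> nat \<Rightarrow> (real \<Rightarrow> real) \<Rightarrow> (real \<Rightarrow> real) \<Rightarrow> real" where
  "emp_inner dsg n u v = (\<Sum>i\<in>{1..n}. u (dsg n i) * v (dsg n i)) / real n"

definition emp_norm2 :: "(nat \<Rightarrow> nat \<Rightarrow> real) \<Rightarrow> nat \<Rightarrow> (real \<Rightarrow> real) \<Rightarrow> real" where
  "emp_norm2 dsg n u = emp_inner dsg n u u"

definition expand :: "nat \<Rightarrow> (nat \<Rightarrow> real) \<Rightarrow> (nat \<Rightarrow> real \<Rightarrow> real) \<Rightarrow> real \<Rightarrow> real" where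
  "expand n a psi = (\<lambda>z. \<Sum>j\<in>{1..n}. a j * psi j z)"

definition mu_w :: "real \<Rightarrow> nat \<Rightarrow> real \<Rightarrow> real" where
  "mu_w c n lam_j = 2 * c / lam_j * sqrt (ln (real n) / real n)"

definition crit ::
  "((real \<Rightarrow> real) \<Rightarrow> (real \<Rightarrow> real)) \<Rightarrow> (nat \<Rightarrow> nat \<Rightarrow> real) \<Rightarrow> nat \<Rightarrow>
   (nat \<Rightarrow> real \<Rightarrow> real) \<Rightarrow> (nat \<Rightarrow> real \<Rightarrow> real) \<Rightarrow> (nat \<Rightarrow> real) \<Rightarrow> real \<Rightarrow>
   (nat \<Rightarrow> real) \<Rightarrow> (nat \<Rightarrow> real) \<Rightarrow> real" where
  "crit F dsg n phi psi lam c y a =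
     (\<Sum>j\<in>{1..n}. \<bar>(\<Sum>i\<in>{1..n}. (y i - F (expand n a psi) (dsg n i)) * (phi j (dsg n i) / lam j)) / real n\<bar>\<^sup>2)
     + (\<Sum>j\<in>{1..n}. mu_w c n (lam j) * \<bar>a j\<bar>)"

text \<open>The smoothness class X_{s,p} (in coefficients w.r.t. psi_1..psi_n).\<close>
definition in_Xsp :: "real \<Rightarrow> real \<Rightarrow> nat \<Rightarrow> (nat \<Rightarrow> real) \<Rightarrow> bool" where
  "in_Xsp s p n a \<longleftrightarrow>
     (\<Sum>j\<in>{1..n}. real j powr (p * (s + 1/2 - 1/p)) * \<bar>a j\<bar> powr p) \<le> 1"

end

theory Submission imports Defs begin

text \<open>In the bases \<psi>_j, \<phi>_j the criterion separates: coordinate j is the one-dimensional lasso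
  problem (x0_j - a_j + E_j)^2 + 2 \<tau>_j |a_j| with noise E_j = \<langle>\<epsilon>, \<phi>_j\<rangle>_n / \<lambda>_j and threshold
  \<tau>_j = c / \<lambda>_j * sqrt (log n / n), solved by soft thresholding. Outside an event of probability
  at most c n^(-1/c^2), every |E_j| \<le> \<tau>_j, and then |x_j - x0_j| \<le> min |x0_j| (2 \<tau>_j), so
  (x_j - x0_j)^2 \<le> |x0_j|^p (2 \<tau>_j)^(2-p). As 1/\<lambda>_j = O(j^t) and t(2-p) = p(s + 1/2 - 1/p),
  summing over j against the weights of X_{s,p} gives the deterministic bound O((log n / n)^((2-p)/2)),
  which is the claimed rate.\<close>

lemma linear_fun_sum:
  fixes F :: "(real \<Rightarrow> real) \<Rightarrow> (real \<Rightarrow> real)"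
  assumes F_lin: "\<And>a b u v. F (\<lambda>z. a * u z + b * v z) = (\<lambda>z. a * F u z + b * F v z)"
    and "finite S"
  shows "F (\<lambda>z. \<Sum>j\<in>S. a j * u j z) = (\<lambda>z. \<Sum>j\<in>S. a j * F (u j) z)"
  using \<open>finite S\<close>
proof (induction S rule: finite_induct)
  case empty
  show ?case using F_lin[of 0 "\<lambda>_. 0" 0 "\<lambda>_. 0"] by simp
next
  case (insert x S)
  then show ?case using F_lin[of "a x" "u x" 1 "\<lambda>z. \<Sum>j\<in>S. a j * u j z"] by simp
qed

lemma emp_norm2_expand_diff:
  assumes psi_on: "\<And>j k. j \<in> {1..n} \<Longrightarrow> k \<in> {1..n} \<Longrightarrow>
          emp_inner dsg n (psi j) (psi k) = (if j = k then 1 else 0)"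
  shows "emp_norm2 dsg n (\<lambda>z. expand n a psi z - expand n b psi z) = (\<Sum>j\<in>{1..n}. (a j - b j)\<^sup>2)"
proof -
  define d where "d j = a j - b j" for j
  have diff: "(\<lambda>z. expand n a psi z - expand n b psi z) = (\<lambda>z. \<Sum>j\<in>{1..n}. d j * psi j z)"
    by (simp add: expand_def d_def left_diff_distrib sum_subtractf)
  have "emp_norm2 dsg n (\<lambda>z. \<Sum>j\<in>{1..n}. d j * psi j z)
     = (\<Sum>j\<in>{1..n}. \<Sum>k\<in>{1..n}. d j * d k * emp_inner dsg n (psi j) (psi k))"
  proof -
    have "(\<Sum>i\<in>{1..n}. (\<Sum>j\<in>{1..n}. d j * psi j (dsg n i)) * (\<Sum>k\<in>{1..n}. d k * psi k (dsg n i)))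
      = (\<Sum>i\<in>{1..n}. \<Sum>j\<in>{1..n}. \<Sum>k\<in>{1..n}. d j * d k * (psi j (dsg n i) * psi k (dsg n i)))"
      by (simp add: sum_distrib_left sum_distrib_right algebra_simps)
    also have "\<dots> = (\<Sum>j\<in>{1..n}. \<Sum>k\<in>{1..n}. \<Sum>i\<in>{1..n}. d j * d k * (psi j (dsg n i) * psi k (dsg n i)))"
      by (subst sum.swap) (rule sum.cong[OF refl], rule sum.swap)
    finally show ?thesis
      unfolding emp_norm2_def emp_inner_def by (simp add: sum_divide_distrib sum_distrib_left)
  qed
  also have "\<dots> = (\<Sum>j\<in>{1..n}. \<Sum>k\<in>{1..n}. if j = k then d j * d k else 0)"
    by (intro sum.cong refl) (simp add: psi_on)
  finally show ?thesis unfolding diff by (simp add: d_def power2_eq_square)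
qed

lemma emp_coefficient_of_combination:
  fixes phi :: "nat \<Rightarrow> real \<Rightarrow> real" and lam d :: "nat \<Rightarrow> real"
  assumes phi_on: "\<And>j k. j \<in> {1..n} \<Longrightarrow> k \<in> {1..n} \<Longrightarrow>
          emp_inner dsg n (phi j) (phi k) = (if j = k then 1 else 0)"
    and "lam j > 0" and j: "j \<in> {1..n}"
  shows "(\<Sum>i\<in>{1..n}. ((\<Sum>k\<in>{1..n}. d k * lam k * phi k (dsg n i)) + ep i) * (phi j (dsg n i) / lam j)) / real n
     = d j + (\<Sum>i\<in>{1..n}. ep i * phi j (dsg n i)) / real n / lam j"
proof -
  define w where "w i = phi j (dsg n i) / lam j" for i
  have "(\<Sum>i\<in>{1..n}. ((\<Sum>k\<in>{1..n}. d k * lam k * phi k (dsg n i)) + ep i) * w i)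
     = (\<Sum>k\<in>{1..n}. \<Sum>i\<in>{1..n}. d k * lam k * phi k (dsg n i) * w i) + (\<Sum>i\<in>{1..n}. ep i * w i)"
    by (subst sum.swap) (simp add: distrib_right sum.distrib sum_distrib_right)
  also have "(\<Sum>k\<in>{1..n}. \<Sum>i\<in>{1..n}. d k * lam k * phi k (dsg n i) * w i)
     = (\<Sum>k\<in>{1..n}. d k * lam k / lam j * (\<Sum>i\<in>{1..n}. phi k (dsg n i) * phi j (dsg n i)))"
    by (rule sum.cong) (simp_all add: sum_distrib_left w_def algebra_simps)
  finally have "(\<Sum>i\<in>{1..n}. ((\<Sum>k\<in>{1..n}. d k * lam k * phi k (dsg n i)) + ep i) * (phi j (dsg n i) / lam j)) / real n
     = (\<Sum>k\<in>{1..n}. d k * lam k / lam j * emp_inner dsg n (phi k) (phi j))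
       + (\<Sum>i\<in>{1..n}. ep i * phi j (dsg n i)) / real n / lam j"
    by (simp add: emp_inner_def add_divide_distrib sum_divide_distrib w_def sum_distrib_left
       times_divide_eq_right mult.commute)
  also have "(\<Sum>k\<in>{1..n}. d k * lam k / lam j * emp_inner dsg n (phi k) (phi j))
      = (\<Sum>k\<in>{1..n}. if k = j then d k * lam k / lam j else 0)"
    by (intro sum.cong refl) (simp add: phi_on[OF _ j])
  also have "\<dots> = d j" using assms(2,3) by simp
  finally show ?thesis .
qed

lemma crit_separable:
  fixes F :: "(real \<Rightarrow> real) \<Rightarrow> (real \<Rightarrow> real)"
    and phi psi :: "nat \<Rightarrow> real \<Rightarrow> real" and lam :: "nat \<Rightarrow> real"
  assumes F_lin: "\<And>a b u v. F (\<lambda>z. a * u z + b * v z) = (\<lambda>z. a * F u z + b * F v z)"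
    and F_psi: "\<And>j. j \<in> {1..n} \<Longrightarrow> F (psi j) = (\<lambda>z. lam j * phi j z)"
    and phi_on: "\<And>j k. j \<in> {1..n} \<Longrightarrow> k \<in> {1..n} \<Longrightarrow>
          emp_inner dsg n (phi j) (phi k) = (if j = k then 1 else 0)"
    and lam_pos: "\<And>j. j \<in> {1..n} \<Longrightarrow> lam j > 0"
  shows "crit F dsg n phi psi lam c (\<lambda>i. F (expand n x0 psi) (dsg n i) + ep i) a
     = (\<Sum>j\<in>{1..n}. (x0 j - a j + (\<Sum>i\<in>{1..n}. ep i * phi j (dsg n i)) / real n / lam j)\<^sup>2
            + mu_w c n (lam j) * \<bar>a j\<bar>)"
proof -
  have F_expand: "F (expand n b psi) = (\<lambda>z. \<Sum>j\<in>{1..n}. b j * lam j * phi j z)" for b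
  proof -
    have "F (expand n b psi) = (\<lambda>z. \<Sum>j\<in>{1..n}. b j * F (psi j) z)"
      unfolding expand_def by (rule linear_fun_sum[OF F_lin]) simp
    then show ?thesis by (simp add: F_psi mult.assoc)
  qed
  have residual: "F (expand n x0 psi) (dsg n i) + ep i - F (expand n a psi) (dsg n i)
      = (\<Sum>k\<in>{1..n}. (x0 k - a k) * lam k * phi k (dsg n i)) + ep i" for i
    by (simp add: F_expand left_diff_distrib sum_subtractf)
  have "\<bar>(\<Sum>i\<in>{1..n}. (F (expand n x0 psi) (dsg n i) + ep i - F (expand n a psi) (dsg n i))
            * (phi j (dsg n i) / lam j)) / real n\<bar>\<^sup>2
     = (x0 j - a j + (\<Sum>i\<in>{1..n}. ep i * phi j (dsg n i)) / real n / lam j)\<^sup>2" if "j \<in> {1..n}" for j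
    using emp_coefficient_of_combination[where n = n and dsg = dsg and phi = phi and lam = lam and j = j
        and d = "\<lambda>k. x0 k - a k" and ep = ep,
        OF phi_on lam_pos[OF that] that]
    unfolding residual by simp
  then show ?thesis unfolding crit_def by (simp add: sum.distrib)
qed

lemma separable_minimizer_coordinatewise:
  fixes G :: "'a \<Rightarrow> 'b \<Rightarrow> real"
  assumes min: "\<And>a. (\<Sum>k\<in>A. G k (x k)) \<le> (\<Sum>k\<in>A. G k (a k))"
    and "finite A" "j \<in> A"
  shows "G j (x j) \<le> G j b"
proof -
  have "G j (x j) + (\<Sum>k\<in>A-{j}. G k (x k)) \<le> G j b + (\<Sum>k\<in>A-{j}. G k ((x(j:=b)) k))"
    using min[of "x(j:=b)"] assms(2,3) by (simp add: sum.remove)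
  moreover have "(\<Sum>k\<in>A-{j}. G k ((x(j:=b)) k)) = (\<Sum>k\<in>A-{j}. G k (x k))"
    by (rule sum.cong) auto
  ultimately show ?thesis by linarith
qed

text \<open>The minimiser of \<open>b \<mapsto> (z - b)\<^sup>2 + 2\<tau>\<bar>b\<bar>\<close> is the soft thresholding of \<open>z\<close> at level \<open>\<tau>\<close>;
  since the criterion exceeds its minimum by at least \<open>(b - s)\<^sup>2\<close>, the minimiser is unique.\<close>
lemma soft_threshold_error:
  fixes x e tau ah :: real
  assumes "tau \<ge> 0" "\<bar>e\<bar> \<le> tau"
    and opt: "\<And>b. (x + e - ah)\<^sup>2 + 2*tau*\<bar>ah\<bar> \<le> (x + e - b)\<^sup>2 + 2*tau*\<bar>b\<bar>"
  shows "\<bar>ah - x\<bar> \<le> \<bar>x\<bar>" and "\<bar>ah - x\<bar> \<le> 2*tau"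
proof -
  define z where "z = x + e"
  define s where "s = (if z > tau then z - tau else if z < -tau then z + tau else 0)"
  have excess: "(z - s)\<^sup>2 + 2*tau*\<bar>s\<bar> + (b - s)\<^sup>2 \<le> (z - b)\<^sup>2 + 2*tau*\<bar>b\<bar>" for b
  proof -
    have "0 \<le> 2*(b-s)*(s-z) + 2*tau*(\<bar>b\<bar> - \<bar>s\<bar>)"
    proof (cases "\<bar>z\<bar> \<le> tau")
      case True
      then have "s = 0" by (auto simp: s_def)
      have "\<bar>b*z\<bar> \<le> \<bar>b\<bar>*tau" using True by (simp add: abs_mult mult_left_mono)
      then show ?thesis using \<open>s = 0\<close> by (simp add: algebra_simps)
    qed (use assms(1) in \<open>auto simp: s_def abs_if algebra_simps mult_le_0_iff split: if_splits\<close>)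
    then show ?thesis by (simp add: power2_eq_square algebra_simps)
  qed
  have "(ah - s)\<^sup>2 \<le> 0" using excess[of ah] opt[of s] unfolding z_def by linarith
  then have "ah = s" by simp
  then show "\<bar>ah - x\<bar> \<le> \<bar>x\<bar>" "\<bar>ah - x\<bar> \<le> 2*tau"
    using assms(1,2) unfolding s_def z_def by (auto simp: abs_if split: if_splits)
qed

lemma sq_le_powr_interpolation:
  fixes d x T p :: real
  assumes "\<bar>d\<bar> \<le> \<bar>x\<bar>" "\<bar>d\<bar> \<le> T" "0 < p" "p < 2"
  shows "d\<^sup>2 \<le> \<bar>x\<bar> powr p * T powr (2 - p)"
proof -
  have "d\<^sup>2 = \<bar>d\<bar> powr p * \<bar>d\<bar> powr (2 - p)" by (simp add: powr_add[symmetric])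
  also have "\<dots> \<le> \<bar>x\<bar> powr p * T powr (2 - p)"
    using assms by (intro mult_mono powr_mono2) auto
  finally show ?thesis .
qed

lemma lasso_coordinate_error:
  fixes x xh e tau K :: real and j :: nat
  assumes "\<bar>e\<bar> \<le> tau"
    and opt: "\<And>b. (x - xh + e)\<^sup>2 + 2*tau*\<bar>xh\<bar> \<le> (x - b + e)\<^sup>2 + 2*tau*\<bar>b\<bar>"
    and tau_le: "2*tau \<le> K * real j powr t" and "j \<ge> 1"
    and exponent: "t * (2 - p) = p * (s + 1/2 - 1/p)" and "0 < p" "p < 2"
  shows "(xh - x)\<^sup>2 \<le> K powr (2-p) * (real j powr (p * (s + 1/2 - 1/p)) * \<bar>x\<bar> powr p)"
proof -
  have tau0: "tau \<ge> 0" using assms(1) by linarith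
  have "\<bar>xh - x\<bar> \<le> \<bar>x\<bar>" "\<bar>xh - x\<bar> \<le> 2*tau"
    using soft_threshold_error[OF tau0 assms(1)] opt by (simp_all add: algebra_simps)
  then have err: "(xh - x)\<^sup>2 \<le> \<bar>x\<bar> powr p * (2*tau) powr (2-p)"
    using sq_le_powr_interpolation assms(6,7) by blast
  have "(2*tau) powr (2-p) \<le> (K * real j powr t) powr (2-p)"
    using tau0 tau_le assms(7) by (intro powr_mono2) auto
  also have "\<dots> = K powr (2-p) * real j powr (p * (s + 1/2 - 1/p))"
    using tau0 tau_le \<open>j \<ge> 1\<close> exponent
    by (simp add: powr_mult powr_powr zero_le_mult_iff)
  finally have "\<bar>x\<bar> powr p * (2*tau) powr (2-p) \<le> \<bar>x\<bar> powr p * (K powr (2-p) * real j powr (p * (s + 1/2 - 1/p)))"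
    by (rule mult_left_mono) simp
  with err show ?thesis by (simp only: mult_ac)
qed

lemma lasso_error_bound:
  fixes F :: "(real \<Rightarrow> real) \<Rightarrow> (real \<Rightarrow> real)"
    and phi psi :: "nat \<Rightarrow> real \<Rightarrow> real" and lam x0 xh ep :: "nat \<Rightarrow> real"
  assumes F_lin: "\<And>a b u v. F (\<lambda>z. a * u z + b * v z) = (\<lambda>z. a * F u z + b * F v z)"
    and F_psi: "\<And>j. j \<in> {1..n} \<Longrightarrow> F (psi j) = (\<lambda>z. lam j * phi j z)"
    and phi_on: "\<And>j k. j \<in> {1..n} \<Longrightarrow> k \<in> {1..n} \<Longrightarrow>
          emp_inner dsg n (phi j) (phi k) = (if j = k then 1 else 0)"
    and psi_on: "\<And>j k. j \<in> {1..n} \<Longrightarrow> k \<in> {1..n} \<Longrightarrow>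
          emp_inner dsg n (psi j) (psi k) = (if j = k then 1 else 0)"
    and lam_pos: "\<And>j. j \<in> {1..n} \<Longrightarrow> lam j > 0"
    and lam_lb: "\<And>j. j \<in> {1..n} \<Longrightarrow> real j powr (-t) / C \<le> lam j"
    and "C > 0" "c > 0"
    and noise: "\<And>j. j \<in> {1..n} \<Longrightarrow>
          \<bar>(\<Sum>i\<in>{1..n}. phi j (dsg n i) * ep i) / real n\<bar> \<le> c * sqrt (ln (real n) / real n)"
    and xh_min: "\<And>a. crit F dsg n phi psi lam c (\<lambda>i. F (expand n x0 psi) (dsg n i) + ep i) xh
              \<le> crit F dsg n phi psi lam c (\<lambda>i. F (expand n x0 psi) (dsg n i) + ep i) a"
    and exponent: "t * (2 - p) = p * (s + 1/2 - 1/p)" and "0 < p" "p < 2"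
    and x0_class: "in_Xsp s p n x0"
  shows "emp_norm2 dsg n (\<lambda>z. expand n xh psi z - expand n x0 psi z)
           \<le> (2*c*C) powr (2-p) * sqrt (ln (real n) / real n) powr (2-p)"
proof -
  define r where "r = sqrt (ln (real n) / real n)"
  have r0: "r \<ge> 0" unfolding r_def by (cases n) (auto simp: ln_ge_zero)
  define E where "E j = (\<Sum>i\<in>{1..n}. ep i * phi j (dsg n i)) / real n / lam j" for j
  define G where "G k b = (x0 k - b + E k)\<^sup>2 + mu_w c n (lam k) * \<bar>b\<bar>" for k b
  have crit_eq: "crit F dsg n phi psi lam c (\<lambda>i. F (expand n x0 psi) (dsg n i) + ep i) a
      = (\<Sum>k\<in>{1..n}. G k (a k))" for a
    unfolding G_def E_def by (rule crit_separable[OF F_lin F_psi phi_on lam_pos])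
  have xh_min_sum: "(\<Sum>k\<in>{1..n}. G k (xh k)) \<le> (\<Sum>k\<in>{1..n}. G k (a k))" for a
    using xh_min[of a] by (simp only: crit_eq)
  have coordinate: "(xh j - x0 j)\<^sup>2 \<le> (2*c*C*r) powr (2-p) * (real j powr (p * (s + 1/2 - 1/p)) * \<bar>x0 j\<bar> powr p)"
    if j: "j \<in> {1..n}" for j
  proof (rule lasso_coordinate_error[where e = "E j" and tau = "c / lam j * r"])
    have lj: "lam j > 0" using lam_pos[OF j] .
    show "\<bar>E j\<bar> \<le> c / lam j * r"
      using divide_right_mono[OF noise[OF j], of "lam j"] lj
      by (simp add: E_def r_def abs_divide mult.commute)
    show "(x0 j - xh j + E j)\<^sup>2 + 2 * (c / lam j * r) * \<bar>xh j\<bar>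
        \<le> (x0 j - b + E j)\<^sup>2 + 2 * (c / lam j * r) * \<bar>b\<bar>" for b
      using separable_minimizer_coordinatewise[where G = G and b = b, OF xh_min_sum finite_atLeastAtMost j]
      by (simp add: G_def mu_w_def r_def mult.assoc)
    have "1 / lam j \<le> C * real j powr t"
      using lam_lb[OF j] lj \<open>C > 0\<close> j by (simp add: powr_minus field_simps)
    then show "2 * (c / lam j * r) \<le> 2*c*C*r * real j powr t"
      using mult_left_mono[of "1 / lam j" "C * real j powr t" "2*c*r"] \<open>c > 0\<close> r0
      by (simp add: algebra_simps)
  qed (use j exponent \<open>0 < p\<close> \<open>p < 2\<close> in auto)
  have "emp_norm2 dsg n (\<lambda>z. expand n xh psi z - expand n x0 psi z) = (\<Sum>j\<in>{1..n}. (xh j - x0 j)\<^sup>2)"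
    by (rule emp_norm2_expand_diff[OF psi_on])
  also have "\<dots> \<le> (2*c*C*r) powr (2-p) * (\<Sum>j\<in>{1..n}. real j powr (p * (s + 1/2 - 1/p)) * \<bar>x0 j\<bar> powr p)"
    unfolding sum_distrib_left by (rule sum_mono) (rule coordinate)
  also have "\<dots> \<le> (2*c*C*r) powr (2-p)"
    using x0_class unfolding in_Xsp_def by (intro mult_left_le) auto
  finally show ?thesis
    using \<open>c > 0\<close> \<open>C > 0\<close> r0 by (simp add: r_def powr_mult)
qed

lemma smoothness_exponents:
  fixes t s p :: real
  assumes "t > 0" "0 < p" "p < 2" and sp: "1 / p = 1/2 + s / (2 * t + 1)"
  shows "t * (2 - p) = p * (s + 1/2 - 1/p)" and "(2 - p) / 2 = 2 * s / (2 * s + 2 * t + 1)"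
proof -
  have key: "2 * (2 * t + 1) = p * (2 * t + 1) + 2 * p * s"
    using sp assms(1,2) by (simp add: field_simps)
  then have "p * (2 * (2 * t + 1)) = p * (p * (2 * t + 1) + 2 * p * s)" by simp
  then show "t * (2 - p) = p * (s + 1/2 - 1/p)"
    using assms(2) by (simp add: field_simps)
  have "2 * p * s = (2 - p) * (2 * t + 1)" using key by (simp add: algebra_simps)
  moreover have "(2 - p) * (2 * t + 1) > 0" using assms(1,3) by simp
  ultimately have "0 < p * (2 * s)" by (simp add: mult.assoc mult.left_commute)
  then have "s > 0" using assms(2) zero_less_mult_pos by fastforce
  then show "(2 - p) / 2 = 2 * s / (2 * s + 2 * t + 1)"
    using key assms(1) by (simp add: field_simps)
qed

lemma sqrt_ratio_powr:
  fixes a b q :: real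
  assumes "a > 0" "b > 0"
  shows "sqrt (a / b) powr q = (b / a) powr (- (q / 2))"
  using assms by (simp add: powr_half_sqrt[symmetric] powr_powr powr_minus_divide powr_divide)

lemma eventually_exp_ln_tail_le:
  fixes c \<delta> :: real
  assumes "c > 0" "\<delta> > 0"
  shows "\<exists>N. \<forall>n\<ge>N. c * exp (- ln (real n) / c\<^sup>2) \<le> \<delta>"
proof -
  have "(\<lambda>n. c * real n powr (- (1 / c\<^sup>2))) \<longlonglongrightarrow> c * 0"
    using \<open>c > 0\<close> by (intro tendsto_mult tendsto_const tendsto_neg_powr filterlim_real_sequentially) auto
  then have "eventually (\<lambda>n. c * real n powr (- (1 / c\<^sup>2)) < \<delta>) sequentially"
    using \<open>\<delta> > 0\<close> by (simp add: order_tendstoD(2))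
  moreover have "eventually (\<lambda>n. real n powr (- (1 / c\<^sup>2)) = exp (- ln (real n) / c\<^sup>2)) sequentially"
    using eventually_gt_at_top[of 0] by eventually_elim (simp add: powr_def)
  ultimately have "eventually (\<lambda>n. c * exp (- ln (real n) / c\<^sup>2) \<le> \<delta>) sequentially"
    by eventually_elim simp
  then show ?thesis by (simp add: eventually_sequentially)
qed

lemma (in prob_space) prob_exceed_le_prob_event:
  fixes X :: "'a \<Rightarrow> 'b::linorder"
  assumes "A \<in> events" and "\<And>\<omega>. \<omega> \<in> space M \<Longrightarrow> \<omega> \<notin> A \<Longrightarrow> X \<omega> \<le> b"
  shows "prob {\<omega> \<in> space M. X \<omega> > b} \<le> prob A"
  using assms by (intro finite_measure_mono) (auto simp flip: not_le)

theorem theorem2: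
  fixes M :: "'w measure"
    and F :: "(real \<Rightarrow> real) \<Rightarrow> (real \<Rightarrow> real)"
    and dsg :: "nat \<Rightarrow> nat \<Rightarrow> real"
    and eps :: "nat \<Rightarrow> 'w \<Rightarrow> real"
    and phi psi :: "nat \<Rightarrow> nat \<Rightarrow> real \<Rightarrow> real"
    and lam :: "nat \<Rightarrow> nat \<Rightarrow> real"
    and x0c :: "nat \<Rightarrow> nat \<Rightarrow> real"
    and xhat :: "nat \<Rightarrow> 'w \<Rightarrow> nat \<Rightarrow> real"
    and t s p c K :: real
  assumes P: "prob_space M"
    and F_lin: "\<And>a b u v. F (\<lambda>z. a * u z + b * v z) = (\<lambda>z. a * F u z + b * F v z)"
    and eps_rv: "\<And>i. eps i \<in> borel_measurable M"
    and eps_indep: "\<And>n. prob_space.indep_vars M (\<lambda>_. borel) eps {1..n}"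
    and eps_mean: "\<And>i. i \<ge> 1 \<Longrightarrow> integrable M (eps i) \<and> (\<integral>\<omega>. eps i \<omega> \<partial>M) = 0"
    and eps_var: "\<And>i. i \<ge> 1 \<Longrightarrow> integrable M (\<lambda>\<omega>. (eps i \<omega>)\<^sup>2)"
    and K_pos: "K > 0"
    and eps_orlicz: "\<And>i. i \<ge> 1 \<Longrightarrow>
          integrable M (\<lambda>\<omega>. exp ((eps i \<omega>)\<^sup>2 / K\<^sup>2)) \<and>
          (\<integral>\<omega>. exp ((eps i \<omega>)\<^sup>2 / K\<^sup>2) \<partial>M) \<le> K"
    and lam_pos: "\<And>n j. 1 \<le> j \<Longrightarrow> j \<le> n \<Longrightarrow> lam n j > 0"
    and lam_decr: "\<And>n j. 1 \<le> j \<Longrightarrow> j < n \<Longrightarrow> lam n (Suc j) \<le> lam n j"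
    and F_psi: "\<And>n j. 1 \<le> j \<Longrightarrow> j \<le> n \<Longrightarrow> F (psi n j) = (\<lambda>z. lam n j * phi n j z)"
    and psi_on: "\<And>n j k. j \<in> {1..n} \<Longrightarrow> k \<in> {1..n} \<Longrightarrow>
          emp_inner dsg n (psi n j) (psi n k) = (if j = k then 1 else 0)"
    and phi_on: "\<And>n j k. j \<in> {1..n} \<Longrightarrow> k \<in> {1..n} \<Longrightarrow>
          emp_inner dsg n (phi n j) (phi n k) = (if j = k then 1 else 0)"
    (* index of ill-posedness t *)
    and t_pos: "t > 0"
    and ill_posed: "\<exists>C>0. \<forall>n j. 1 \<le> j \<and> j \<le> n \<longrightarrow>
          real j powr (-t) / C \<le> lam n j \<and> lam n j \<le> C * real j powr (-t)"
    and c_pos: "c > 0"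
    and c_bound: "\<And>n. n \<ge> 2 \<Longrightarrow>
          prob_space.prob M {\<omega> \<in> space M.
             (MAX j\<in>{1..n}. \<bar>(\<Sum>i\<in>{1..n}. phi n j (dsg n i) * eps i \<omega>) / real n\<bar>)
               > c * sqrt (ln (real n) / real n)}
          \<le> c * exp (- ln (real n) / c\<^sup>2)"
    (* the estimator: a minimiser of the criterion for the data y_i = F(x_0)(t_i) + eps_i *)
    and xhat_min: "\<And>n \<omega> a. n \<ge> 1 \<Longrightarrow> \<omega> \<in> space M \<Longrightarrow>
          crit F dsg n (phi n) (psi n) (lam n) c
               (\<lambda>i. F (expand n (x0c n) (psi n)) (dsg n i) + eps i \<omega>) (xhat n \<omega>)
          \<le> crit F dsg n (phi n) (psi n) (lam n) c
               (\<lambda>i. F (expand n (x0c n) (psi n)) (dsg n i) + eps i \<omega>) a"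
    and p_pos: "0 < p" and p_lt2: "p < 2"
    and sp: "1 / p = 1/2 + s / (2 * t + 1)"
    and x0_class: "\<And>n. in_Xsp s p n (x0c n)"
  shows "\<forall>\<delta>>0. \<exists>B>0. \<exists>N. \<forall>n\<ge>N.
           prob_space.prob M {\<omega> \<in> space M.
              emp_norm2 dsg n (\<lambda>z. expand n (xhat n \<omega>) (psi n) z - expand n (x0c n) (psi n) z)
                > B * (real n / ln (real n)) powr (- (2 * s) / (2 * s + 2 * t + 1))}
           \<le> \<delta>"
proof (intro allI impI)
  fix \<delta> :: real assume "\<delta> > 0"
  interpret prob_space M by (rule P)
  obtain C where "C > 0" and lam_lb: "\<And>n j. 1 \<le> j \<Longrightarrow> j \<le> n \<Longrightarrow> real j powr (-t) / C \<le> lam n j"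
    using ill_posed by blast
  note exponents = smoothness_exponents[OF t_pos p_pos p_lt2 sp]
  obtain N where tail: "\<And>n. n \<ge> N \<Longrightarrow> c * exp (- ln (real n) / c\<^sup>2) \<le> \<delta>"
    using eventually_exp_ln_tail_le[OF c_pos \<open>\<delta> > 0\<close>] by blast
  define B where "B = (2*c*C) powr (2-p)"
  show "\<exists>B>0. \<exists>N. \<forall>n\<ge>N. prob {\<omega> \<in> space M.
          emp_norm2 dsg n (\<lambda>z. expand n (xhat n \<omega>) (psi n) z - expand n (x0c n) (psi n) z)
            > B * (real n / ln (real n)) powr (- (2 * s) / (2 * s + 2 * t + 1))} \<le> \<delta>"
  proof (intro exI[of _ B] conjI exI[of _ "max N 2"] allI impI)
    show "B > 0" using c_pos \<open>C > 0\<close> by (simp add: B_def)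
    fix n assume n: "n \<ge> max N 2"
    have rate: "B * (real n / ln (real n)) powr (- (2 * s) / (2 * s + 2 * t + 1))
        = (2*c*C) powr (2-p) * sqrt (ln (real n) / real n) powr (2-p)"
      using n by (simp add: B_def sqrt_ratio_powr exponents(2))
    define noisy where "noisy = {\<omega> \<in> space M.
        (MAX j\<in>{1..n}. \<bar>(\<Sum>i\<in>{1..n}. phi n j (dsg n i) * eps i \<omega>) / real n\<bar>) > c * sqrt (ln (real n) / real n)}"
    have "prob {\<omega> \<in> space M. emp_norm2 dsg n (\<lambda>z. expand n (xhat n \<omega>) (psi n) z - expand n (x0c n) (psi n) z)
            > B * (real n / ln (real n)) powr (- (2 * s) / (2 * s + 2 * t + 1))} \<le> prob noisy"
    proof (rule prob_exceed_le_prob_event)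
      show "noisy \<in> events" unfolding noisy_def using eps_rv by measurable
      fix \<omega> assume "\<omega> \<in> space M" "\<omega> \<notin> noisy"
      then have max_le: "(MAX j\<in>{1..n}. \<bar>(\<Sum>i\<in>{1..n}. phi n j (dsg n i) * eps i \<omega>) / real n\<bar>)
          \<le> c * sqrt (ln (real n) / real n)"
        by (simp add: noisy_def not_less)
      have quiet: "\<bar>(\<Sum>i\<in>{1..n}. phi n j (dsg n i) * eps i \<omega>) / real n\<bar> \<le> c * sqrt (ln (real n) / real n)"
        if "j \<in> {1..n}" for j
        using order_trans[OF Max_ge max_le] that by simp
      show "emp_norm2 dsg n (\<lambda>z. expand n (xhat n \<omega>) (psi n) z - expand n (x0c n) (psi n) z)
          \<le> B * (real n / ln (real n)) powr (- (2 * s) / (2 * s + 2 * t + 1))"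
        unfolding rate
        by (rule lasso_error_bound[where ep = "\<lambda>i. eps i \<omega>", OF F_lin _ phi_on psi_on _ _ \<open>C > 0\<close>
              c_pos quiet _ exponents(1) p_pos p_lt2 x0_class])
          (use F_psi lam_pos lam_lb xhat_min[of n \<omega>] n \<open>\<omega> \<in> space M\<close> in auto)
    qed
    also have "\<dots> \<le> \<delta>" using c_bound[of n] tail[of n] n by (simp add: noisy_def)
    finally show "prob {\<omega> \<in> space M. emp_norm2 dsg n (\<lambda>z. expand n (xhat n \<omega>) (psi n) z - expand n (x0c n) (psi n) z)
            > B * (real n / ln (real n)) powr (- (2 * s) / (2 * s + 2 * t + 1))} \<le> \<delta>" .
  qed
qed

end
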